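(* Let $\mathcal{A}$ be a unital algebra generated by two unital subalgebras $\mathcal{A}_1,\mathcal{A}_2$. Let $T\subset \mathbb{R}$ be such that $0$ is an accumulation point of $T$, and let $(\tau_t)_{t\in T}$ be unital linear functionals on $\mathcal{A}$ such that: $\mathcal{A}_1$ and $\mathcal{A}_2$ are free with respect to $\tau_t$ up to order $o(t)$; and there exist maps $\tau,\tau':\mathcal{A}_1\cup \mathcal{A}_2\to \mathbb{C}$ such that for all $a\in \mathcal{A}_1 \cup \mathcal{A}_2$, as $t\to 0$, $\tau_t(a)= \tau(a)+t\, \tau'(a) +o(t)$. Then $\tau$ and $\tau'$ extend to linear functionals on $\mathcal{A}$ such that for all $a\in \mathcal{A}$, as $t\to 0$, $\tau_t(a)= \tau(a)+t\,\tau'(a) +o(t)$. Moreover, $\mathcal{A}_1$ and $\mathcal{A}_2$ are infinitesimally free with respect to $(\tau,\tau')$.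
   Context: $\mathcal{A}_1$ and $\mathcal{A}_2$ are free with respect to $\tau_t$ up to order $o(t)$ if whenever $a_1\in\mathcal{A}_{i_1},\dots,a_n\in\mathcal{A}_{i_n}$ with consecutive indices different, $\tau_t((a_1-\tau_t(a_1))\cdots(a_n-\tau_t(a_n)))=o(t)$ as $t\to0$. Infinitesimal freeness w.r.t. $(\tau,\tau')$ (where $\tau(1)=1,\tau'(1)=0$): whenever $a_j\in\mathcal{A}_{i_j}$ with consecutive indices different and $\tau(a_j)=0$ for all $j$, $\tau(a_1\cdots a_n)=0$ and $\tau'(a_1\cdots a_n)=\sum_{j=1}^n\tau(a_1\cdots a_{j-1}\tau'(a_j)a_{j+1}\cdots a_n)$. *)

theory Defs
  imports "HOL-Analysis.Analysis" "HOL-Library.Landau_Symbols"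
begin

definition complex_algebra :: "(complex \<Rightarrow> 'a::ring_1 \<Rightarrow> 'a) \<Rightarrow> bool" where
  "complex_algebra s \<longleftrightarrow> vector_space s \<and>
     (\<forall>c x y. s c (x * y) = s c x * y \<and> s c (x * y) = x * s c y)"

definition unital_subalgebra :: "(complex \<Rightarrow> 'a::ring_1 \<Rightarrow> 'a) \<Rightarrow> 'a set \<Rightarrow> bool" where
  "unital_subalgebra s S \<longleftrightarrow> 1 \<in> S \<and>
     (\<forall>x\<in>S. \<forall>y\<in>S. x + y \<in> S \<and> x * y \<in> S) \<and> (\<forall>c. \<forall>x\<in>S. s c x \<in> S)"

definition generated_by :: "(complex \<Rightarrow> 'a::ring_1 \<Rightarrow> 'a) \<Rightarrow> 'a set \<Rightarrow> 'a set \<Rightarrow> bool" where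
  "generated_by s A1 A2 \<longleftrightarrow>
     (\<forall>B. unital_subalgebra s B \<and> A1 \<union> A2 \<subseteq> B \<longrightarrow> B = UNIV)"

definition lin_functional :: "(complex \<Rightarrow> 'a::ab_group_add \<Rightarrow> 'a) \<Rightarrow> ('a \<Rightarrow> complex) \<Rightarrow> bool" where
  "lin_functional s f \<longleftrightarrow> Vector_Spaces.linear s ((*) :: complex \<Rightarrow> complex \<Rightarrow> complex) f"

definition alt_word :: "'a set \<Rightarrow> 'a set \<Rightarrow> nat \<Rightarrow> (nat \<Rightarrow> bool) \<Rightarrow> (nat \<Rightarrow> 'a) \<Rightarrow> bool" where
  "alt_word A1 A2 n i a \<longleftrightarrow>
     (\<forall>j<n. a j \<in> (if i j then A1 else A2)) \<and> (\<forall>j. Suc j < n \<longrightarrow> i j \<noteq> i (Suc j))"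

definition word_prod :: "nat \<Rightarrow> (nat \<Rightarrow> 'a::monoid_mult) \<Rightarrow> 'a" where
  "word_prod n a = prod_list (map a [0..<n])"

definition small_o_t :: "real set \<Rightarrow> (real \<Rightarrow> complex) \<Rightarrow> bool" where
  "small_o_t T f \<longleftrightarrow> f \<in> o[at 0 within T](\<lambda>t. complex_of_real t)"

definition free_up_to_o_t ::
  "(complex \<Rightarrow> 'a::ring_1 \<Rightarrow> 'a) \<Rightarrow> real set \<Rightarrow> (real \<Rightarrow> 'a \<Rightarrow> complex) \<Rightarrow> 'a set \<Rightarrow> 'a set \<Rightarrow> bool" where
  "free_up_to_o_t s T tau A1 A2 \<longleftrightarrow>
     (\<forall>n i a. n \<ge> 1 \<and> alt_word A1 A2 n i a \<longrightarrow>
        small_o_t T (\<lambda>t. tau t (word_prod n (\<lambda>j. a j - s (tau t (a j)) 1))))"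

definition inf_free ::
  "(complex \<Rightarrow> 'a::ring_1 \<Rightarrow> 'a) \<Rightarrow> ('a \<Rightarrow> complex) \<Rightarrow> ('a \<Rightarrow> complex) \<Rightarrow> 'a set \<Rightarrow> 'a set \<Rightarrow> bool" where
  "inf_free s phi phi' A1 A2 \<longleftrightarrow> phi 1 = 1 \<and> phi' 1 = 0 \<and>
     (\<forall>n i a. n \<ge> 1 \<and> alt_word A1 A2 n i a \<and> (\<forall>j<n. phi (a j) = 0) \<longrightarrow>
        phi (word_prod n a) = 0 \<and>
        phi' (word_prod n a) =
          (\<Sum>j<n. phi (word_prod n (a(j := s (phi' (a j)) 1)))))"

end

theory Submission
  imports Defs
begin

text \<open>
  Centre a letter \<open>x\<close> at time \<open>t\<close> as \<open>x - \<tau>\<^sub>t(x) 1\<close>. Centring the letters of a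
  word from position \<open>k\<close> on, one at a time, telescopes: \<open>\<tau>\<^sub>t\<close> of the word is \<open>\<tau>\<^sub>t\<close> of the
  partially centred word plus terms \<open>\<tau>\<^sub>t(x\<^sub>j) \<tau>\<^sub>t(w\<^sub>j)\<close>, where \<open>w\<^sub>j\<close> is a partially
  centred word with the letter \<open>x\<^sub>j\<close> removed. By induction on the length, \<open>\<tau>\<^sub>t\<close> of every
  partially centred word therefore has an expansion \<open>c\<^sub>0 + t c\<^sub>1 + o(t)\<close>: a word with two
  adjacent letters from the same subalgebra can be shortened, and a fully centred alternating
  word is \<open>o(t)\<close> by freeness. Words span the algebra, so every \<open>\<tau>\<^sub>t(a)\<close> has an expansion;
  its coefficients \<open>\<tau>(a)\<close> and \<open>\<tau>'(a)\<close> (\<open>phi\<close> and \<open>phi'\<close> below) are unique, hence linear in \<open>a\<close>.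
  For a \<open>\<tau>\<close>-centred alternating word the same identity, with \<open>\<tau>\<^sub>t(x\<^sub>j) = t \<tau>'(x\<^sub>j) + o(t)\<close>
  and \<open>\<tau>\<^sub>t(w\<^sub>j)\<close> tending to \<open>\<tau>\<close> of the word with \<open>x\<^sub>j\<close> deleted, gives infinitesimal freeness.
\<close>

definition has_expansion :: "real set \<Rightarrow> (real \<Rightarrow> complex) \<Rightarrow> complex \<Rightarrow> complex \<Rightarrow> bool" where
  "has_expansion T f c0 c1 \<longleftrightarrow> ((\<lambda>t. (f t - c0) / complex_of_real t) \<longlongrightarrow> c1) (at 0 within T)"

definition expandable :: "real set \<Rightarrow> (real \<Rightarrow> complex) \<Rightarrow> bool" where
  "expandable T f \<longleftrightarrow> (\<exists>c0 c1. has_expansion T f c0 c1)"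

lemma eventually_of_real_nonzero_at_0: "eventually (\<lambda>t. complex_of_real t \<noteq> 0) (at 0 within T)"
  by (auto simp: eventually_at_filter)

lemma eventually_mem_at_within: "eventually (\<lambda>t. t \<in> T) (at x within T)"
  by (auto simp: eventually_at_filter)

lemma small_o_t_iff_has_expansion:
  "small_o_t T (\<lambda>t. f t - c0 - complex_of_real t * c1) \<longleftrightarrow> has_expansion T f c0 c1"
proof -
  have quotient: "(f t - c0 - complex_of_real t * c1) / complex_of_real t
      = (f t - c0) / complex_of_real t - c1" if "complex_of_real t \<noteq> 0" for t
    using that by (simp add: field_simps)
  have "small_o_t T (\<lambda>t. f t - c0 - complex_of_real t * c1) \<longleftrightarrow>
      ((\<lambda>t. (f t - c0 - complex_of_real t * c1) / complex_of_real t) \<longlongrightarrow> 0) (at 0 within T)"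
    unfolding small_o_t_def
    by (auto intro: smalloI_tendsto[OF _ eventually_of_real_nonzero_at_0] dest: smalloD_tendsto)
  also have "\<dots> \<longleftrightarrow> ((\<lambda>t. (f t - c0) / complex_of_real t - c1) \<longlongrightarrow> 0) (at 0 within T)"
    by (rule tendsto_cong) (rule eventually_mono[OF eventually_of_real_nonzero_at_0 quotient])
  also have "\<dots> \<longleftrightarrow> has_expansion T f c0 c1"
    unfolding has_expansion_def by (rule LIM_zero_iff)
  finally show ?thesis .
qed

lemma has_expansion_tendsto:
  assumes "has_expansion T f c0 c1"
  shows "(f \<longlongrightarrow> c0) (at 0 within T)"
proof -
  have "((\<lambda>t. c0 + complex_of_real t * ((f t - c0) / complex_of_real t)) \<longlongrightarrow> c0 + 0 * c1)
      (at 0 within T)"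
    using assms tendsto_of_real[OF tendsto_ident_at[of 0 T]] unfolding has_expansion_def
    by (intro tendsto_intros) simp_all
  then have "((\<lambda>t. c0 + complex_of_real t * ((f t - c0) / complex_of_real t)) \<longlongrightarrow> c0)
      (at 0 within T)"
    by simp
  then show ?thesis
    by (rule Lim_transform_eventually)
      (rule eventually_mono[OF eventually_of_real_nonzero_at_0], simp)
qed

lemma has_expansion_cong:
  "has_expansion T f c0 c1 \<Longrightarrow> (\<And>t. t \<in> T \<Longrightarrow> f t = g t) \<Longrightarrow> has_expansion T g c0 c1"
  unfolding has_expansion_def
  by (erule Lim_transform_eventually) (rule eventually_mono[OF eventually_mem_at_within], simp)

lemma has_expansion_const: "has_expansion T (\<lambda>_. c) c 0"
  unfolding has_expansion_def by simp

lemma has_expansion_add: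
  "has_expansion T f c0 c1 \<Longrightarrow> has_expansion T g d0 d1 \<Longrightarrow>
    has_expansion T (\<lambda>t. f t + g t) (c0 + d0) (c1 + d1)"
  unfolding has_expansion_def
  by (drule (1) tendsto_add) (simp add: add_divide_distrib[symmetric] algebra_simps)

lemma has_expansion_mult:
  assumes f: "has_expansion T f c0 c1" and g: "has_expansion T g d0 d1"
  shows "has_expansion T (\<lambda>t. f t * g t) (c0 * d0) (c1 * d0 + c0 * d1)"
proof -
  have "((\<lambda>t. (f t - c0) / complex_of_real t * g t + c0 * ((g t - d0) / complex_of_real t))
      \<longlongrightarrow> c1 * d0 + c0 * d1) (at 0 within T)"
    using f g has_expansion_tendsto[OF g] unfolding has_expansion_def by (intro tendsto_intros)
  then show ?thesis
    unfolding has_expansion_def by (simp add: add_divide_distrib[symmetric] algebra_simps)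
qed

lemma has_expansion_mult_tendsto:
  "has_expansion T f 0 c \<Longrightarrow> (g \<longlongrightarrow> d) (at 0 within T) \<Longrightarrow>
    has_expansion T (\<lambda>t. f t * g t) 0 (c * d)"
  unfolding has_expansion_def by (drule (1) tendsto_mult) simp

lemma has_expansion_sum:
  "(\<And>j. j \<in> J \<Longrightarrow> has_expansion T (f j) (c0 j) (c1 j)) \<Longrightarrow>
    has_expansion T (\<lambda>t. \<Sum>j\<in>J. f j t) (\<Sum>j\<in>J. c0 j) (\<Sum>j\<in>J. c1 j)"
  by (induction J rule: infinite_finite_induct) (auto intro: has_expansion_add has_expansion_const)

lemma has_expansion_unique:
  assumes "0 islimpt T" "has_expansion T f c0 c1" "has_expansion T f d0 d1"
  shows "c0 = d0 \<and> c1 = d1"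
proof -
  have nontrivial: "at 0 within T \<noteq> bot"
    using assms(1) by (simp add: trivial_limit_within)
  have "c0 = d0"
    using tendsto_unique[OF nontrivial] has_expansion_tendsto assms(2,3) by blast
  then show ?thesis
    using tendsto_unique[OF nontrivial] assms(2,3) unfolding has_expansion_def by blast
qed

lemma expandable_const: "expandable T (\<lambda>_. c)"
  unfolding expandable_def using has_expansion_const by blast

lemma expandable_add: "expandable T f \<Longrightarrow> expandable T g \<Longrightarrow> expandable T (\<lambda>t. f t + g t)"
  unfolding expandable_def using has_expansion_add by blast

lemma expandable_mult: "expandable T f \<Longrightarrow> expandable T g \<Longrightarrow> expandable T (\<lambda>t. f t * g t)"
  unfolding expandable_def using has_expansion_mult by blast

lemma expandable_diff: "expandable T f \<Longrightarrow> expandable T g \<Longrightarrow> expandable T (\<lambda>t. f t - g t)"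
proof -
  assume "expandable T f" "expandable T g"
  then have "expandable T (\<lambda>t. f t + (-1) * g t)"
    by (intro expandable_add expandable_mult expandable_const)
  then show ?thesis by simp
qed

lemma expandable_sum:
  "(\<And>j. j \<in> J \<Longrightarrow> expandable T (f j)) \<Longrightarrow> expandable T (\<lambda>t. \<Sum>j\<in>J. f j t)"
  by (induction J rule: infinite_finite_induct) (auto intro: expandable_add expandable_const)

lemma expandable_cong:
  "expandable T f \<Longrightarrow> (\<And>t. t \<in> T \<Longrightarrow> f t = g t) \<Longrightarrow> expandable T g"
  unfolding expandable_def using has_expansion_cong by blast

lemma lin_functional_module_hom: "lin_functional s f \<Longrightarrow> module_hom s (*) f"
  unfolding lin_functional_def Vector_Spaces.linear_def by simp

lemmas lin_functional_add = module_hom.add[OF lin_functional_module_hom]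
  and lin_functional_scale = module_hom.scale[OF lin_functional_module_hom]
  and lin_functional_sum = module_hom.sum[OF lin_functional_module_hom]

lemma lin_functionalI:
  "vector_space s \<Longrightarrow> (\<And>x y. f (x + y) = f x + f y) \<Longrightarrow> (\<And>c x. f (s c x) = c * f x) \<Longrightarrow>
    lin_functional s f"
  unfolding lin_functional_def Vector_Spaces.linear_iff
  using vector_space_over_itself.vector_space_axioms by blast

lemma complex_algebra_scale_mult_left: "complex_algebra s \<Longrightarrow> s c x * y = s c (x * y)"
  unfolding complex_algebra_def by metis

lemma complex_algebra_scale_mult_right: "complex_algebra s \<Longrightarrow> x * s c y = s c (x * y)"
  unfolding complex_algebra_def by metis

inductive_set word_span :: "(complex \<Rightarrow> 'a::ring_1 \<Rightarrow> 'a) \<Rightarrow> 'a set \<Rightarrow> 'a set"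
  for s A where
  word: "set ys \<subseteq> A \<Longrightarrow> prod_list ys \<in> word_span s A"
| add: "x \<in> word_span s A \<Longrightarrow> y \<in> word_span s A \<Longrightarrow> x + y \<in> word_span s A"
| scale: "x \<in> word_span s A \<Longrightarrow> s c x \<in> word_span s A"

lemma word_span_mult:
  assumes alg: "complex_algebra s" and x: "x \<in> word_span s A" and y: "y \<in> word_span s A"
  shows "x * y \<in> word_span s A"
  using x
proof induction
  case (word xs)
  show ?case
    using y
  proof induction
    case (word ys)
    then show ?case
      using word_span.word[of "xs @ ys"] \<open>set xs \<subseteq> A\<close> by simp
  qed (simp_all add: distrib_left complex_algebra_scale_mult_right[OF alg] word_span.intros)
qed (simp_all add: distrib_right complex_algebra_scale_mult_left[OF alg] word_span.intros)

lemma word_span_eq_UNIV: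
  assumes "complex_algebra s" and "generated_by s A1 A2"
  shows "word_span s (A1 \<union> A2) = UNIV"
proof -
  have "unital_subalgebra s (word_span s (A1 \<union> A2))"
    unfolding unital_subalgebra_def
    using word_span.word[of "[]"] word_span.add word_span.scale word_span_mult[OF assms(1)]
    by auto
  moreover have "A1 \<union> A2 \<subseteq> word_span s (A1 \<union> A2)"
  proof
    fix x
    assume "x \<in> A1 \<union> A2"
    then show "x \<in> word_span s (A1 \<union> A2)"
      using word_span.word[of "[x]"] by simp
  qed
  ultimately show ?thesis
    using assms(2) unfolding generated_by_def by blast
qed

definition prod_map_from :: "('a::monoid_mult \<Rightarrow> 'a) \<Rightarrow> nat \<Rightarrow> 'a list \<Rightarrow> 'a" where
  "prod_map_from g k ys = prod_list (take k ys) * prod_list (map g (drop k ys))"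

definition remove_at :: "nat \<Rightarrow> 'a list \<Rightarrow> 'a list" where
  "remove_at j ys = take j ys @ drop (Suc j) ys"

lemma prod_map_from_0 [simp]: "prod_map_from g 0 ys = prod_list (map g ys)"
  by (simp add: prod_map_from_def)

lemma prod_map_from_length [simp]: "prod_map_from g (length ys) ys = prod_list ys"
  by (simp add: prod_map_from_def)

lemma prod_map_from_remove_at:
  "j < length ys \<Longrightarrow>
    prod_map_from g j (remove_at j ys) =
      prod_list (take j ys) * prod_list (map g (drop (Suc j) ys))"
  by (simp add: prod_map_from_def remove_at_def)

lemma length_remove_at: "j < length ys \<Longrightarrow> length (remove_at j ys) = length ys - 1"
  by (simp add: remove_at_def)

lemma set_remove_at_subset: "set (remove_at j ys) \<subseteq> set ys"
  by (auto simp: remove_at_def dest: in_set_takeD in_set_dropD)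

lemma prod_list_telescope:
  fixes ys :: "'a::ring_1 list"
  assumes "k \<le> length ys"
  shows "prod_list ys = prod_map_from g k ys +
    (\<Sum>j=k..<length ys. prod_list (take j ys) * (ys!j - g (ys!j)) * prod_list (map g (drop (Suc j) ys)))"
    (is "_ = _ + sum ?step _")
proof -
  have "?step j = prod_map_from g (Suc j) ys - prod_map_from g j ys" if "j < length ys" for j
    using that
    by (simp add: prod_map_from_def take_Suc_conv_app_nth Cons_nth_drop_Suc[symmetric] algebra_simps)
  then have "sum ?step {k..<length ys} = prod_list ys - prod_map_from g k ys"
    using sum_Suc_diff'[OF assms, of "\<lambda>j. prod_map_from g j ys"] by simp
  then show ?thesis by simp
qed

lemma alternating_or_shorter_word:
  assumes sub1: "unital_subalgebra s A1" and sub2: "unital_subalgebra s A2"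
    and ys: "set ys \<subseteq> A1 \<union> A2"
  obtains "alt_word A1 A2 (length ys) (\<lambda>j. ys!j \<in> A1) ((!) ys)"
  | zs where "length zs < length ys" "set zs \<subseteq> A1 \<union> A2" "prod_list zs = prod_list ys"
proof (cases "\<exists>j. Suc j < length ys \<and> (ys!j \<in> A1 \<longleftrightarrow> ys!Suc j \<in> A1)")
  case True
  then obtain j where j: "Suc j < length ys" and same: "ys!j \<in> A1 \<longleftrightarrow> ys!Suc j \<in> A1"
    by blast
  define zs where "zs = take j ys @ (ys!j * ys!Suc j) # drop (Suc (Suc j)) ys"
  have "ys = take j ys @ ys!j # ys!Suc j # drop (Suc (Suc j)) ys"
    using j by (simp add: Cons_nth_drop_Suc id_take_nth_drop)
  then have "prod_list zs = prod_list ys"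
    unfolding zs_def by (metis mult.assoc prod_list.Cons prod_list.append)
  moreover have "ys!j * ys!Suc j \<in> A1 \<union> A2"
    using same ys j nth_mem[of j ys] nth_mem[of "Suc j" ys] sub1 sub2
    unfolding unital_subalgebra_def by (metis Suc_lessD Un_iff subsetD)
  then have "set zs \<subseteq> A1 \<union> A2"
    using ys unfolding zs_def by (auto dest: in_set_takeD in_set_dropD)
  moreover have "length zs < length ys"
    using j unfolding zs_def by simp
  ultimately show thesis
    using that(2) by blast
next
  case False
  then show thesis
    using ys nth_mem by (intro that(1)) (fastforce simp: alt_word_def)
qed

lemma word_prod_update_scale:
  assumes "complex_algebra s" and "j < n"
  shows "word_prod n (a(j := s c 1)) = s c (prod_list (remove_at j (map a [0..<n])))"
proof -
  have "map (a(j := s c 1)) [0..<n] = (map a [0..<n])[j := s c 1]"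
    by (rule nth_equalityI) (auto simp: nth_list_update)
  then have "word_prod n (a(j := s c 1))
      = prod_list (take j (map a [0..<n])) * s c 1 * prod_list (drop (Suc j) (map a [0..<n]))"
    using assms(2) by (simp add: word_prod_def upd_conv_take_nth_drop mult.assoc)
  then show ?thesis
    by (simp add: remove_at_def complex_algebra_scale_mult_left[OF assms(1)]
        complex_algebra_scale_mult_right[OF assms(1)])
qed

locale asymptotically_free_family =
  fixes s :: "complex \<Rightarrow> 'a::ring_1 \<Rightarrow> 'a"
    and A1 A2 :: "'a set"
    and T :: "real set"
    and tau :: "real \<Rightarrow> 'a \<Rightarrow> complex"
  assumes alg: "complex_algebra s"
    and sub1: "unital_subalgebra s A1"
    and sub2: "unital_subalgebra s A2"
    and gen: "generated_by s A1 A2"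
    and acc: "0 islimpt T"
    and lin: "\<And>t. t \<in> T \<Longrightarrow> lin_functional s (tau t)"
    and unital: "\<And>t. t \<in> T \<Longrightarrow> tau t 1 = 1"
    and free: "free_up_to_o_t s T tau A1 A2"
    and expandable_letter: "\<And>a. a \<in> A1 \<union> A2 \<Longrightarrow> expandable T (\<lambda>t. tau t a)"
begin

definition centered :: "real \<Rightarrow> 'a \<Rightarrow> 'a" where
  "centered t x = x - s (tau t x) 1"

lemma tau_prod_list_telescope:
  assumes t: "t \<in> T" and k: "k \<le> length ys"
  shows "tau t (prod_list ys) = tau t (prod_map_from (centered t) k ys) +
    (\<Sum>j=k..<length ys. tau t (ys!j) * tau t (prod_map_from (centered t) j (remove_at j ys)))"
proof -
  have "prod_list (take j ys) * (ys!j - centered t (ys!j)) *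
        prod_list (map (centered t) (drop (Suc j) ys))
      = s (tau t (ys!j)) (prod_map_from (centered t) j (remove_at j ys))" if "j < length ys" for j
    using that
    by (simp add: centered_def prod_map_from_remove_at complex_algebra_scale_mult_left[OF alg]
        complex_algebra_scale_mult_right[OF alg])
  then have "prod_list ys = prod_map_from (centered t) k ys +
      (\<Sum>j=k..<length ys. s (tau t (ys!j)) (prod_map_from (centered t) j (remove_at j ys)))"
    using prod_list_telescope[OF k, of "centered t"] by simp
  then show ?thesis
    using lin[OF t] by (simp add: lin_functional_add lin_functional_scale lin_functional_sum)
qed

lemma has_expansion_centered_free_word:
  assumes "alt_word A1 A2 n i a" and "n \<ge> 1"
  shows "has_expansion T (\<lambda>t. tau t (prod_map_from (centered t) 0 (map a [0..<n]))) 0 0"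
proof -
  have "small_o_t T (\<lambda>t. tau t (word_prod n (\<lambda>j. a j - s (tau t (a j)) 1)))"
    using free assms unfolding free_up_to_o_t_def by blast
  then show ?thesis
    by (simp add: small_o_t_iff_has_expansion[symmetric] word_prod_def centered_def o_def)
qed

lemma expandable_mixed_word:
  "set ys \<subseteq> A1 \<union> A2 \<Longrightarrow> k \<le> length ys \<Longrightarrow>
    expandable T (\<lambda>t. tau t (prod_map_from (centered t) k ys))"
proof (induction "length ys" arbitrary: ys k rule: less_induct)
  case less
  let ?rest = "\<lambda>k t. \<Sum>j=k..<length ys.
    tau t (ys!j) * tau t (prod_map_from (centered t) j (remove_at j ys))"
  have "expandable T (\<lambda>t. tau t (prod_map_from (centered t) j (remove_at j ys)))"
    if "j < length ys" for j
    using less.hyps[of "remove_at j ys" j] less.prems(1) set_remove_at_subset[of j ys] that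
    by (simp add: length_remove_at)
  moreover have "expandable T (\<lambda>t. tau t (ys!j))" if "j < length ys" for j
    using less.prems(1) nth_mem[OF that] by (blast intro: expandable_letter)
  ultimately have rest: "expandable T (?rest k)" for k
    by (intro expandable_sum expandable_mult) auto
  have word: "expandable T (\<lambda>t. tau t (prod_list ys))"
    using sub1 sub2 less.prems(1)
  proof (cases rule: alternating_or_shorter_word)
    case 1
    show ?thesis
    proof (cases "ys = []")
      case True
      then show ?thesis
        using unital by (auto intro: expandable_cong[OF expandable_const[of T 1]])
    next
      case False
      have "has_expansion T (\<lambda>t. tau t (prod_map_from (centered t) 0 ys)) 0 0"
        using has_expansion_centered_free_word[OF 1] False by (simp add: map_nth Suc_le_eq)
      then have "expandable T (\<lambda>t. tau t (prod_map_from (centered t) 0 ys))"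
        unfolding expandable_def by blast
      then have "expandable T (\<lambda>t. tau t (prod_map_from (centered t) 0 ys) + ?rest 0 t)"
        using rest by (rule expandable_add)
      then show ?thesis
        by (rule expandable_cong) (use tau_prod_list_telescope[of _ 0 ys] in simp)
    qed
  next
    case (2 zs)
    then show ?thesis
      using less.hyps[of zs "length zs"] by simp
  qed
  have "expandable T (\<lambda>t. tau t (prod_list ys) - ?rest k t)"
    using word rest by (rule expandable_diff)
  then show ?case
    by (rule expandable_cong) (simp add: tau_prod_list_telescope[OF _ less.prems(2)])
qed

lemma expandable_tau: "expandable T (\<lambda>t. tau t x)"
proof -
  have "x \<in> word_span s (A1 \<union> A2)"
    using word_span_eq_UNIV[OF alg gen] by simp
  then show ?thesis
  proof induction
    case (word ys)
    then show ?case
      using expandable_mixed_word[of ys "length ys"] by simp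
  next
    case (add x y)
    then have "expandable T (\<lambda>t. tau t x + tau t y)"
      by (intro expandable_add)
    then show ?case
      by (rule expandable_cong) (simp add: lin_functional_add[OF lin])
  next
    case (scale x c)
    then have "expandable T (\<lambda>t. c * tau t x)"
      by (intro expandable_mult expandable_const)
    then show ?case
      by (rule expandable_cong) (simp add: lin_functional_scale[OF lin])
  qed
qed

definition phi :: "'a \<Rightarrow> complex" where
  "phi a = Lim (at 0 within T) (\<lambda>t. tau t a)"

definition phi' :: "'a \<Rightarrow> complex" where
  "phi' a = Lim (at 0 within T) (\<lambda>t. (tau t a - phi a) / complex_of_real t)"

lemma has_expansion_phi: "has_expansion T (\<lambda>t. tau t a) (phi a) (phi' a)"
proof -
  have nontrivial: "at 0 within T \<noteq> bot"
    using acc by (simp add: trivial_limit_within)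
  obtain c0 c1 where expansion: "has_expansion T (\<lambda>t. tau t a) c0 c1"
    using expandable_tau unfolding expandable_def by blast
  have "phi a = c0"
    unfolding phi_def by (rule tendsto_Lim[OF nontrivial has_expansion_tendsto[OF expansion]])
  moreover have "phi' a = c1"
    using expansion unfolding phi'_def has_expansion_def \<open>phi a = c0\<close>
    by (rule tendsto_Lim[OF nontrivial])
  ultimately show ?thesis
    using expansion by simp
qed

lemma phi_phi'_eqI: "has_expansion T (\<lambda>t. tau t a) c0 c1 \<Longrightarrow> phi a = c0 \<and> phi' a = c1"
  using has_expansion_unique[OF acc has_expansion_phi] by blast

lemma phi_phi'_add: "phi (x + y) = phi x + phi y \<and> phi' (x + y) = phi' x + phi' y"
proof (rule phi_phi'_eqI)
  show "has_expansion T (\<lambda>t. tau t (x + y)) (phi x + phi y) (phi' x + phi' y)"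
    by (rule has_expansion_cong[OF has_expansion_add[OF has_expansion_phi has_expansion_phi]])
      (simp add: lin_functional_add[OF lin])
qed

lemma phi_phi'_scale: "phi (s c x) = c * phi x \<and> phi' (s c x) = c * phi' x"
proof (rule phi_phi'_eqI)
  have "has_expansion T (\<lambda>t. c * tau t x) (c * phi x) (c * phi' x)"
    using has_expansion_mult[OF has_expansion_const has_expansion_phi, of c x] by simp
  then show "has_expansion T (\<lambda>t. tau t (s c x)) (c * phi x) (c * phi' x)"
    by (rule has_expansion_cong) (simp add: lin_functional_scale[OF lin])
qed

lemma lin_functional_phi: "lin_functional s phi"
  and lin_functional_phi': "lin_functional s phi'"
  using alg phi_phi'_add phi_phi'_scale unfolding complex_algebra_def
  by (auto intro!: lin_functionalI)

lemma phi_phi'_one: "phi 1 = 1 \<and> phi' 1 = 0"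
  by (rule phi_phi'_eqI, rule has_expansion_cong[OF has_expansion_const]) (simp add: unital)

lemma tendsto_tau_mixed_word:
  assumes letters: "set zs \<subseteq> A1 \<union> A2" and centered: "\<forall>x\<in>set zs. phi x = 0"
    and k: "k \<le> length zs"
  shows "((\<lambda>t. tau t (prod_map_from (centered t) k zs)) \<longlongrightarrow> phi (prod_list zs)) (at 0 within T)"
proof -
  have "((\<lambda>t. tau t (zs!j) * tau t (prod_map_from (centered t) j (remove_at j zs))) \<longlongrightarrow> 0)
      (at 0 within T)" if j: "j < length zs" for j
  proof -
    obtain c0 c1 where
      "has_expansion T (\<lambda>t. tau t (prod_map_from (centered t) j (remove_at j zs))) c0 c1"
      using expandable_mixed_word[of "remove_at j zs" j] letters set_remove_at_subset[of j zs] j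
      unfolding expandable_def by (force simp: length_remove_at)
    moreover have "phi (zs!j) = 0"
      using centered j by simp
    ultimately show ?thesis
      using tendsto_mult[OF has_expansion_tendsto[OF has_expansion_phi[of "zs!j"]]
          has_expansion_tendsto] by fastforce
  qed
  then have "((\<lambda>t. tau t (prod_list zs) - (\<Sum>j=k..<length zs.
        tau t (zs!j) * tau t (prod_map_from (centered t) j (remove_at j zs))))
      \<longlongrightarrow> phi (prod_list zs) - 0) (at 0 within T)"
    by (intro tendsto_diff has_expansion_tendsto[OF has_expansion_phi] tendsto_null_sum) auto
  then have "((\<lambda>t. tau t (prod_list zs) - (\<Sum>j=k..<length zs.
        tau t (zs!j) * tau t (prod_map_from (centered t) j (remove_at j zs))))
      \<longlongrightarrow> phi (prod_list zs)) (at 0 within T)"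
    by simp
  then show ?thesis
    by (rule Lim_transform_eventually[OF _ eventually_mono[OF eventually_mem_at_within]])
      (simp add: tau_prod_list_telescope[OF _ k])
qed

lemma has_expansion_centered_alternating_word:
  assumes alternating: "alt_word A1 A2 n i a" and "n \<ge> 1" and centered: "\<forall>j<n. phi (a j) = 0"
  shows "has_expansion T (\<lambda>t. tau t (word_prod n a)) 0
    (\<Sum>j<n. phi' (a j) * phi (prod_list (remove_at j (map a [0..<n]))))"
proof -
  define ys where "ys = map a [0..<n]"
  have letters: "set ys \<subseteq> A1 \<union> A2"
    using alternating unfolding alt_word_def ys_def by (auto split: if_splits)
  have ys_centered: "\<forall>x\<in>set ys. phi x = 0"
    using centered unfolding ys_def by auto
  have "has_expansion T (\<lambda>t. tau t (ys!j) * tau t (prod_map_from (centered t) j (remove_at j ys)))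
      0 (phi' (a j) * phi (prod_list (remove_at j ys)))" if j: "j < n" for j
  proof (rule has_expansion_mult_tendsto)
    show "has_expansion T (\<lambda>t. tau t (ys!j)) 0 (phi' (a j))"
      using has_expansion_phi[of "a j"] centered j unfolding ys_def by simp
    show "((\<lambda>t. tau t (prod_map_from (centered t) j (remove_at j ys)))
        \<longlongrightarrow> phi (prod_list (remove_at j ys))) (at 0 within T)"
      using letters ys_centered set_remove_at_subset[of j ys] j
      by (intro tendsto_tau_mixed_word) (auto simp: ys_def length_remove_at)
  qed
  then have "has_expansion T (\<lambda>t. tau t (prod_map_from (centered t) 0 ys) + (\<Sum>j=0..<n.
        tau t (ys!j) * tau t (prod_map_from (centered t) j (remove_at j ys))))
      (0 + (\<Sum>j=0..<n. 0)) (0 + (\<Sum>j=0..<n. phi' (a j) * phi (prod_list (remove_at j ys))))"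
    using has_expansion_centered_free_word[OF assms(1,2)] unfolding ys_def
    by (intro has_expansion_add has_expansion_sum) auto
  then have "has_expansion T (\<lambda>t. tau t (prod_map_from (centered t) 0 ys) + (\<Sum>j=0..<n.
        tau t (ys!j) * tau t (prod_map_from (centered t) j (remove_at j ys))))
      0 (\<Sum>j<n. phi' (a j) * phi (prod_list (remove_at j ys)))"
    by (simp add: atLeast0LessThan)
  then show ?thesis
    unfolding word_prod_def ys_def[symmetric]
    by (rule has_expansion_cong) (use tau_prod_list_telescope[of _ 0 ys] in \<open>simp add: ys_def\<close>)
qed

lemma inf_free_phi_phi': "inf_free s phi phi' A1 A2"
  unfolding inf_free_def
proof (intro conjI allI impI)
  fix n i a
  assume "1 \<le> n \<and> alt_word A1 A2 n i a \<and> (\<forall>j<n. phi (a j) = 0)"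
  then have "phi (word_prod n a) = 0 \<and>
      phi' (word_prod n a) = (\<Sum>j<n. phi' (a j) * phi (prod_list (remove_at j (map a [0..<n]))))"
    by (intro phi_phi'_eqI has_expansion_centered_alternating_word) auto
  moreover have "phi (word_prod n (a(j := s (phi' (a j)) 1)))
      = phi' (a j) * phi (prod_list (remove_at j (map a [0..<n])))" if "j < n" for j
    using word_prod_update_scale[OF alg that] lin_functional_scale[OF lin_functional_phi] by simp
  ultimately show "phi (word_prod n a) = 0"
    and "phi' (word_prod n a) = (\<Sum>j<n. phi (word_prod n (a(j := s (phi' (a j)) 1))))"
    by simp_all
qed (use phi_phi'_one in simp_all)

end

theorem proposition2p4:
  fixes s :: "complex \<Rightarrow> 'a::ring_1 \<Rightarrow> 'a"
    and A1 A2 :: "'a set"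
    and T :: "real set"
    and tau :: "real \<Rightarrow> 'a \<Rightarrow> complex"
    and tau0 tau1 :: "'a \<Rightarrow> complex"
  assumes alg: "complex_algebra s"
    and sub1: "unital_subalgebra s A1"
    and sub2: "unital_subalgebra s A2"
    and gen: "generated_by s A1 A2"
    and acc: "(0::real) islimpt T"
    and lin: "\<And>t. t \<in> T \<Longrightarrow> lin_functional s (tau t)"
    and unital: "\<And>t. t \<in> T \<Longrightarrow> tau t 1 = 1"
    and free: "free_up_to_o_t s T tau A1 A2"
    and expand: "\<And>a. a \<in> A1 \<union> A2 \<Longrightarrow>
                   small_o_t T (\<lambda>t. tau t a - tau0 a - complex_of_real t * tau1 a)"
  shows "\<exists>phi phi'. lin_functional s phi \<and> lin_functional s phi' \<and>
           (\<forall>a\<in>A1 \<union> A2. phi a = tau0 a \<and> phi' a = tau1 a) \<and>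
           (\<forall>a. small_o_t T (\<lambda>t. tau t a - phi a - complex_of_real t * phi' a)) \<and>
           inf_free s phi phi' A1 A2"
proof -
  interpret asymptotically_free_family s A1 A2 T tau
  proof
    show "expandable T (\<lambda>t. tau t a)" if "a \<in> A1 \<union> A2" for a
      using expand[OF that] unfolding small_o_t_iff_has_expansion expandable_def by blast
  qed (fact assms)+
  have "\<forall>a\<in>A1 \<union> A2. phi a = tau0 a \<and> phi' a = tau1 a"
    using phi_phi'_eqI expand[unfolded small_o_t_iff_has_expansion] by blast
  moreover have "\<forall>a. small_o_t T (\<lambda>t. tau t a - phi a - complex_of_real t * phi' a)"
    by (simp add: small_o_t_iff_has_expansion has_expansion_phi)
  ultimately show ?thesis
    using lin_functional_phi lin_functional_phi' inf_free_phi_phi' by blast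
qed

end
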